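(* Let $N\ge 4$, let $l,r$ be positive integers with $2\le l+r\le N-2$, let $\hat O\in V_{\mathcal N}$ be $(l,r)$-invertible, let $\hat X_i\in V_{\{i\}}$ ($i=1,\dots,N$), and let $\hat Y_k$ ($k=N-r,\dots,l$) be defined by $\hat Y_{N-r}=\hat X_{N-r+1}\cdots\hat X_N$ and $\hat Y_{k-1}=\bar E_{\{k-l,\dots,k-1\}}^{\{k,\dots,k+r-1\}}\bigl(E_{\{k-l,\dots,k-1\}}^{\{k,\dots,k+r\}}(\hat X_k\hat Y_k)\bigr)$ for $k=N-r,\dots,l+1$ (bar = Moore–Penrose pseudoinverse). Then for every $k=l+1,\dots,N-r$, $$E_{\{1,\dots,k-1\}}^{\{k,\dots,k+r-1\}}(\hat Y_{k-1})=E_{\{1,\dots,k-1\}}^{\{k,\dots,k+r\}}(\hat X_k\hat Y_k).$$ Moreover, for such $k$ the linear map $\phi$ from $\mathrm{ran}\bigl[E_{\{1,\dots,k-1\}}^{\{k,\dots,k+r\}}\bigr]$ to $V_{\{k-l,\dots,k-1\}}$ given by the partial trace $\mathrm{tr}_{\{1,\dots,k-l-1\}}$ is injective.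
   Context: Sites $\mathcal N=\{1,\dots,N\}$, each with Hilbert space $\mathbb C^d$. For each site $i$, $\{\hat P_i^{(\alpha)}\}_{\alpha=1,\dots,d^2}$ is a Hilbert–Schmidt-orthonormal operator basis on site $i$. For $\mathcal I\subset\mathcal N$, $V_{\mathcal I}$ is the complex span of the products $\prod_{i\in\mathcal I}\hat P_i^{(\alpha_i)}$, with Hilbert–Schmidt inner product; operators in $V_{\mathcal I}$ are identified with their tensor product with the identity on the other sites. $\mathrm{tr}_{\mathcal S}$ is the partial trace over sites in $\mathcal S$. For fixed $\hat O\in V_{\mathcal N}$ and disjoint $\mathcal I,\mathcal J\subset\mathcal N$ with $\mathcal I\cup\mathcal J$ contiguous, $E_{\mathcal I}^{\mathcal J}:V_{\mathcal J}\to V_{\mathcal I}$, $E_{\mathcal I}^{\mathcal J}(\hat X)=\mathrm{tr}_{\mathcal N\setminus\mathcal I}[\hat X\hat O]$. Definition ($(l,r)$-invertibility): $\hat O$ is $(l,r)$-invertible if for all integers $k$ with $l\le k\le N-r-1$, $\mathrm{rank}\bigl[E_{\{k-l+1,\dots,k\}}^{\{k+1,\dots,k+r\}}\bigr]=\mathrm{rank}\bigl[E_{\{1,\dots,k\}}^{\{k+1,\dots,N\}}\bigr]$. *)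

theory Defs
  imports Complex_Main "HOL-Library.Function_Algebras"
begin

text \<open>Sites are 1..N, local dimension d. A basis state (configuration) of a set S of sites
is a function c :: nat => nat with c i < d for i in S and c i = 0 outside S.
An operator on the full Hilbert space is represented by its matrix entries
X s t (s, t configurations of {1..N}); entries at non-configurations are 0.\<close>

type_synonym op = "(nat \<Rightarrow> nat) \<Rightarrow> (nat \<Rightarrow> nat) \<Rightarrow> complex"

definition cfg :: "nat \<Rightarrow> nat set \<Rightarrow> (nat \<Rightarrow> nat) set" where
  "cfg d S = {c. \<forall>i. (i \<in> S \<longrightarrow> c i < d) \<and> (i \<notin> S \<longrightarrow> c i = 0)}"

definition restr :: "nat set \<Rightarrow> (nat \<Rightarrow> nat) \<Rightarrow> (nat \<Rightarrow> nat)" where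
  "restr I s = (\<lambda>i. if i \<in> I then s i else 0)"

definition merge :: "nat set \<Rightarrow> (nat \<Rightarrow> nat) \<Rightarrow> (nat \<Rightarrow> nat) \<Rightarrow> (nat \<Rightarrow> nat)" where
  "merge S c a = (\<lambda>i. if i \<in> S then c i else a i)"

text \<open>embed d N I A is the operator A (on the sites I) tensored with the identity on the other sites.\<close>
definition embed :: "nat \<Rightarrow> nat \<Rightarrow> nat set \<Rightarrow> op \<Rightarrow> op" where
  "embed d N I A = (\<lambda>s t. if s \<in> cfg d {1..N} \<and> t \<in> cfg d {1..N} \<and> (\<forall>i\<in>{1..N} - I. s i = t i)
                          then A (restr I s) (restr I t) else 0)"

text \<open>V_I: operators supported on the sites I (identified with their tensor product with the identity).\<close>
definition Vsp :: "nat \<Rightarrow> nat \<Rightarrow> nat set \<Rightarrow> op set" where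
  "Vsp d N I = range (embed d N I)"

definition opid :: "nat \<Rightarrow> nat \<Rightarrow> op" where
  "opid d N = embed d N {} (\<lambda>_ _. 1)"

definition opmult :: "nat \<Rightarrow> nat \<Rightarrow> op \<Rightarrow> op \<Rightarrow> op" where
  "opmult d N X Y = (\<lambda>s t. \<Sum>u\<in>cfg d {1..N}. X s u * Y u t)"

text \<open>Partial trace over the sites S; the result acts on {1..N} - S (identity-extended).\<close>
definition ptr :: "nat \<Rightarrow> nat \<Rightarrow> nat set \<Rightarrow> op \<Rightarrow> op" where
  "ptr d N S Z = embed d N ({1..N} - S)
     (\<lambda>a b. \<Sum>c\<in>cfg d S. Z (merge S c a) (merge S c b))"

text \<open>E_I^J(X) = tr_{N\I}[X O]; the domain V_J only enters through rank / pseudoinverse.\<close>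
definition Emap :: "nat \<Rightarrow> nat \<Rightarrow> op \<Rightarrow> nat set \<Rightarrow> op \<Rightarrow> op" where
  "Emap d N Ob I X = ptr d N ({1..N} - I) (opmult d N X Ob)"

definition cscale :: "complex \<Rightarrow> op \<Rightarrow> op" where
  "cscale c X = (\<lambda>s t. c * X s t)"

definition Erank :: "nat \<Rightarrow> nat \<Rightarrow> op \<Rightarrow> nat set \<Rightarrow> nat set \<Rightarrow> nat" where
  "Erank d N Ob I J = vector_space.dim cscale (Emap d N Ob I ` Vsp d N J)"

definition hs_inner :: "nat \<Rightarrow> nat \<Rightarrow> op \<Rightarrow> op \<Rightarrow> complex" where
  "hs_inner d N A B = (\<Sum>s\<in>cfg d {1..N}. \<Sum>t\<in>cfg d {1..N}. cnj (A s t) * B s t)"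

text \<open>Moore-Penrose pseudoinverse of E_I^J : V_J -> V_I applied to y: the unique x in V_J,
orthogonal to the kernel, such that E x - y is orthogonal to the range of E.\<close>
definition Epinv :: "nat \<Rightarrow> nat \<Rightarrow> op \<Rightarrow> nat set \<Rightarrow> nat set \<Rightarrow> op \<Rightarrow> op" where
  "Epinv d N Ob I J y = (THE x. x \<in> Vsp d N J
      \<and> (\<forall>z\<in>Vsp d N J. Emap d N Ob I z = 0 \<longrightarrow> hs_inner d N z x = 0)
      \<and> (\<forall>z\<in>Vsp d N J. hs_inner d N (Emap d N Ob I z) (Emap d N Ob I x - y) = 0))"

definition lr_invertible :: "nat \<Rightarrow> nat \<Rightarrow> op \<Rightarrow> nat \<Rightarrow> nat \<Rightarrow> bool" where
  "lr_invertible d N Ob l r = (\<forall>k. l \<le> k \<and> k + r + 1 \<le> N \<longrightarrow>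
      Erank d N Ob {k-l+1..k} {k+1..k+r} = Erank d N Ob {1..k} {k+1..N})"

end

theory Submission
  imports Defs
begin

(* Fix k with l+1 <= k <= N-r and write E = E_{1..k-1}, T = tr_{1..k-l-1},
   R = E(V_{k..N}) and M = E(V_{k..k+r-1}) <= R.  Partial traces compose, so
   E_{k-l..k-1} = T o E, and (l,r)-invertibility at k-1 says dim T(M) = dim R.
   Since dim T(M) <= dim M <= dim R, linear algebra forces M = R and T injective on R
   (in particular on E(V_{k..k+r}), the second claim).  By backward induction on k every
   Y_k lies in V_{k+1..N}: then X_k Y_k lies in V_{k..N}, so E(X_k Y_k) is in R = M, i.e.
   the equation E_{k-l..k-1}(x) = E_{k-l..k-1}(X_k Y_k) is consistent on V_{k..k+r-1};
   the pseudoinverse therefore returns an exact solution Y_{k-1} in V_{k..k+r-1}, and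
   injectivity of T on R turns this local equation into the first claim. *)

section \<open>Configurations and the operator spaces V_I\<close>

lemma finite_cfg: "finite S \<Longrightarrow> finite (cfg d S)"
proof -
  assume "finite S"
  have "cfg d S = {f. \<forall>x. (x \<in> S \<longrightarrow> f x \<in> {..<d}) \<and> (x \<notin> S \<longrightarrow> f x = 0)}"
    by (auto simp: cfg_def)
  then show ?thesis using finite_set_of_finite_funs[of S "{..<d}" 0] \<open>finite S\<close> by simp
qed

lemma op_sum_apply: "(\<Sum>p\<in>A. (f p :: op)) s t = (\<Sum>p\<in>A. f p s t)"
  by (induction A rule: infinite_finite_induct) auto

interpretation V: vector_space cscale
  by unfold_locales (auto simp: cscale_def fun_eq_iff algebra_simps)

lemma embed_eq: "embed d N I A s t = (if s \<in> cfg d {1..N} \<and> t \<in> cfg d {1..N} \<and> (\<forall>i\<in>{1..N} - I. s i = t i)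
                          then A (restr I s) (restr I t) else 0)"
  by (simp add: embed_def)

lemma restr_cfg: "s \<in> cfg d U \<Longrightarrow> I \<subseteq> U \<Longrightarrow> 0 < d \<Longrightarrow> restr I s \<in> cfg d U"
  by (auto simp: cfg_def restr_def)

lemma restr_restr[simp]: "restr I (restr J s) = restr (I \<inter> J) s"
  by (auto simp: restr_def fun_eq_iff)

lemma restr_merge: "v \<in> cfg d K \<Longrightarrow> restr K (merge K v a) = v"
  by (auto simp: fun_eq_iff restr_def merge_def cfg_def)

lemma merge_cfg: "v \<in> cfg d K \<Longrightarrow> a \<in> cfg d U \<Longrightarrow> K \<subseteq> U \<Longrightarrow> merge K v a \<in> cfg d U"
  by (auto simp: cfg_def merge_def)

lemma Vsp_char:
  assumes "0 < d" "I \<subseteq> {1..N}"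
  shows "X \<in> Vsp d N I \<longleftrightarrow> embed d N I X = X"
proof
  assume "X \<in> Vsp d N I"
  then obtain A where X: "X = embed d N I A" by (auto simp: Vsp_def)
  show "embed d N I X = X"
  proof (rule ext, rule ext)
    fix s t
    show "embed d N I X s t = X s t"
      using assms unfolding X embed_eq
      by (auto simp: restr_cfg) (auto simp: restr_def)
  qed
next
  assume "embed d N I X = X" then show "X \<in> Vsp d N I" unfolding Vsp_def by (metis rangeI)
qed

lemma Vsp_eq:
  assumes "0 < d" "I \<subseteq> {1..N}" "X \<in> Vsp d N I"
  shows "X s t = (if s \<in> cfg d {1..N} \<and> t \<in> cfg d {1..N} \<and> (\<forall>i\<in>{1..N} - I. s i = t i)
                          then X (restr I s) (restr I t) else 0)"
  using Vsp_char[OF assms(1,2)] assms(3) embed_eq[of d N I X s t] by simp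

lemma Vsp_mono:
  assumes "0 < d" "J \<subseteq> {1..N}" "I \<subseteq> J"
  shows "Vsp d N I \<subseteq> Vsp d N J"
proof
  fix X assume X: "X \<in> Vsp d N I"
  have I: "I \<subseteq> {1..N}" using assms by auto
  have "embed d N J X = X"
  proof (rule ext, rule ext)
    fix s t
    have agree: "((\<forall>i\<in>{1..N} - J. s i = t i) \<and> (\<forall>i\<in>{1..N} - I. restr J s i = restr J t i))
               = (\<forall>i\<in>{1..N} - I. s i = t i)"
      using assms(3) by (auto simp: restr_def)
    show "embed d N J X s t = X s t"
      using Vsp_eq[OF assms(1) I X, of s t] Vsp_eq[OF assms(1) I X, of "restr J s" "restr J t"]
        assms agree by (auto simp: embed_eq restr_cfg Int_absorb2)
  qed
  then show "X \<in> Vsp d N J" using Vsp_char[OF assms(1,2)] by simp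
qed

lemma sum_cfg_fibre:
  assumes "a \<in> cfg d U" "K \<subseteq> U" "finite U"
    and "\<And>u. u \<in> cfg d U \<Longrightarrow> \<not>(\<forall>i\<in>U-K. u i = a i) \<Longrightarrow> f u = 0"
  shows "(\<Sum>u\<in>cfg d U. f u) = (\<Sum>v\<in>cfg d K. f (merge K v a))"
proof -
  let ?A = "{u\<in>cfg d U. \<forall>i\<in>U-K. u i = a i}"
  have "(\<Sum>u\<in>cfg d U. f u) = (\<Sum>u\<in>?A. f u)"
    by (rule sum.mono_neutral_right) (auto simp: finite_cfg assms)
  also have "?A = (\<lambda>v. merge K v a) ` cfg d K"
  proof
    show "(\<lambda>v. merge K v a) ` cfg d K \<subseteq> ?A"
      using merge_cfg[OF _ assms(1,2)] by (auto simp: merge_def)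
    show "?A \<subseteq> (\<lambda>v. merge K v a) ` cfg d K"
    proof
      fix u assume u: "u \<in> ?A"
      have "u = merge K (restr K u) a"
      proof (rule ext)
        fix x show "u x = merge K (restr K u) a x"
          using u assms(1,2) by (cases "x \<in> U") (auto simp: merge_def restr_def cfg_def)
      qed
      moreover have "restr K u \<in> cfg d K" using u assms by (auto simp: cfg_def restr_def)
      ultimately show "u \<in> (\<lambda>v. merge K v a) ` cfg d K" by blast
    qed
  qed
  also have "(\<Sum>u\<in>(\<lambda>v. merge K v a) ` cfg d K. f u) = (\<Sum>v\<in>cfg d K. f (merge K v a))"
  proof (rule sum.reindex_cong[where l="\<lambda>v. merge K v a"])
    show "inj_on (\<lambda>v. merge K v a) (cfg d K)"
      by (rule inj_on_inverseI[where g="restr K"]) (rule restr_merge)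
  qed auto
  finally show ?thesis .
qed

lemma Vsp_mult:
  assumes "0 < d" "K \<subseteq> {1..N}" "X \<in> Vsp d N K" "Y \<in> Vsp d N K"
  shows "opmult d N X Y \<in> Vsp d N K"
proof -
  let ?C = "cfg d {1..N}"
  have local_form: "opmult d N X Y a b = (\<Sum>v\<in>cfg d K. X (restr K a) v * Y v (restr K b))"
    if a: "a \<in> ?C" "b \<in> ?C" "\<forall>i\<in>{1..N}-K. a i = b i" for a b
  proof -
    have "opmult d N X Y a b = (\<Sum>v\<in>cfg d K. X a (merge K v a) * Y (merge K v a) b)"
      unfolding opmult_def
    proof (rule sum_cfg_fibre[OF a(1) assms(2)])
      fix u assume "u \<in> ?C" "\<not>(\<forall>i\<in>{1..N}-K. u i = a i)"
      then show "X a u * Y u b = 0" using Vsp_eq[OF assms(1,2,3), of a u] by auto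
    qed simp
    also have "\<dots> = (\<Sum>v\<in>cfg d K. X (restr K a) v * Y v (restr K b))"
    proof (rule sum.cong[OF refl])
      fix v assume v: "v \<in> cfg d K"
      have m: "merge K v a \<in> ?C" using merge_cfg[OF v a(1) assms(2)] .
      have "X a (merge K v a) = X (restr K a) v"
        using Vsp_eq[OF assms(1,2,3), of a "merge K v a"] m a restr_merge[OF v]
        by (auto simp: merge_def)
      moreover have "Y (merge K v a) b = Y v (restr K b)"
        using Vsp_eq[OF assms(1,2,4), of "merge K v a" b] m a restr_merge[OF v]
        by (auto simp: merge_def)
      ultimately show "X a (merge K v a) * Y (merge K v a) b = X (restr K a) v * Y v (restr K b)"
        by simp
    qed
    finally show ?thesis .
  qed
  have "embed d N K (opmult d N X Y) = opmult d N X Y"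
  proof (rule ext, rule ext)
    fix s t
    show "embed d N K (opmult d N X Y) s t = opmult d N X Y s t"
    proof (cases "s \<in> ?C \<and> t \<in> ?C \<and> (\<forall>i\<in>{1..N} - K. s i = t i)")
      case True
      have r: "restr K s \<in> ?C" "restr K t \<in> ?C" using True restr_cfg assms(1,2) by auto
      have r3: "\<forall>i\<in>{1..N}-K. restr K s i = restr K t i" by (simp add: restr_def)
      have "opmult d N X Y (restr K s) (restr K t) = opmult d N X Y s t"
        using local_form[of s t] local_form[OF r r3] True by simp
      then show ?thesis using True by (simp add: embed_eq)
    next
      case False
      have "opmult d N X Y s t = 0" unfolding opmult_def
      proof (rule sum.neutral, rule ballI)
        fix u assume "u \<in> ?C"
        show "X s u * Y u t = 0"
          using Vsp_eq[OF assms(1,2,3), of s u] Vsp_eq[OF assms(1,2,4), of u t] False by auto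
      qed
      then show ?thesis using False by (auto simp: embed_eq)
    qed
  qed
  then show ?thesis using Vsp_char[OF assms(1,2)] by simp
qed

section \<open>Partial traces\<close>

lemma merge_restr_cfg: "s \<in> cfg d U \<Longrightarrow> merge S c (restr (U - S) s) = merge S c s"
  by (auto simp: fun_eq_iff merge_def restr_def cfg_def)

lemma ptr_eq:
  assumes "S \<subseteq> {1..N}"
  shows "ptr d N S Z s t = (if s \<in> cfg d {1..N} \<and> t \<in> cfg d {1..N} \<and> (\<forall>i\<in>S. s i = t i)
     then (\<Sum>c\<in>cfg d S. Z (merge S c s) (merge S c t)) else 0)"
proof -
  have e: "{1..N} - ({1..N} - S) = S" using assms by auto
  show ?thesis unfolding ptr_def embed_eq e by (auto simp: merge_restr_cfg)
qed

lemma ptr_apply: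
  assumes "S \<subseteq> {1..N}" "s \<in> cfg d {1..N}" "t \<in> cfg d {1..N}" "\<forall>i\<in>S. s i = t i"
  shows "ptr d N S Z s t = (\<Sum>c\<in>cfg d S. Z (merge S c s) (merge S c t))"
  using ptr_eq[OF assms(1), of d Z s t] assms(2-4) by argo

lemma ptr_apply_zero:
  assumes "S \<subseteq> {1..N}" "\<not> (s \<in> cfg d {1..N} \<and> t \<in> cfg d {1..N} \<and> (\<forall>i\<in>S. s i = t i))"
  shows "ptr d N S Z s t = 0"
  using ptr_eq[OF assms(1), of d Z s t] assms(2) by argo

lemma sum_cfg_split:
  assumes "S1 \<inter> S2 = {}"
  shows "(\<Sum>c\<in>cfg d (S1 \<union> S2). g c) = (\<Sum>c2\<in>cfg d S2. \<Sum>c1\<in>cfg d S1. g (merge S1 c1 c2))"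
proof -
  let ?m = "\<lambda>p. merge S1 (snd p) (fst p)"
  have "(\<Sum>c\<in>cfg d (S1 \<union> S2). g c) = (\<Sum>p\<in>cfg d S2 \<times> cfg d S1. g (?m p))"
  proof (rule sum.reindex_cong[where l="?m"])
    show "inj_on ?m (cfg d S2 \<times> cfg d S1)"
    proof (rule inj_onI, clarsimp)
      fix a b a' b' assume h: "a \<in> cfg d S2" "b \<in> cfg d S1" "a' \<in> cfg d S2" "b' \<in> cfg d S1"
        "merge S1 b a = merge S1 b' a'"
      have "b i = b' i \<and> a i = a' i" for i
      proof -
        have hi: "(if i\<in>S1 then b i else a i) = (if i \<in> S1 then b' i else a' i)"
          using fun_cong[OF h(5), of i] by (simp add: merge_def)
        show ?thesis
        proof (cases "i \<in> S1")
          case True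
          then have "i \<notin> S2" using assms by blast
          then show ?thesis using hi True h(1-4) by (simp add: cfg_def)
        next
          case False then show ?thesis using hi h(1-4) by (simp add: cfg_def)
        qed
      qed
      then show "a = a' \<and> b = b'" by auto
    qed
    show "cfg d (S1 \<union> S2) = ?m ` (cfg d S2 \<times> cfg d S1)"
    proof
      show "?m ` (cfg d S2 \<times> cfg d S1) \<subseteq> cfg d (S1 \<union> S2)"
        by (auto simp: cfg_def merge_def)
      show "cfg d (S1 \<union> S2) \<subseteq> ?m ` (cfg d S2 \<times> cfg d S1)"
      proof
        fix c assume c: "c \<in> cfg d (S1 \<union> S2)"
        have "c = ?m (restr S2 c, restr S1 c)"
          using c by (auto simp: fun_eq_iff merge_def restr_def cfg_def)
        moreover have "(restr S2 c, restr S1 c) \<in> cfg d S2 \<times> cfg d S1"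
          using c by (auto simp: cfg_def restr_def)
        ultimately show "c \<in> ?m ` (cfg d S2 \<times> cfg d S1)" by blast
      qed
    qed
  qed auto
  also have "\<dots> = (\<Sum>c2\<in>cfg d S2. \<Sum>c1\<in>cfg d S1. g (merge S1 c1 c2))"
    by (simp add: sum.cartesian_product case_prod_beta)
  finally show ?thesis .
qed

lemma ptr_comp:
  assumes "S1 \<inter> S2 = {}" "S1 \<subseteq> {1..N}" "S2 \<subseteq> {1..N}"
  shows "ptr d N (S1 \<union> S2) Z = ptr d N S2 (ptr d N S1 Z)"
proof (rule ext, rule ext)
  fix s t
  let ?C = "cfg d {1..N}"
  have U: "S1 \<union> S2 \<subseteq> {1..N}" using assms by auto
  have mm: "merge (S1 \<union> S2) (merge S1 c1 c2) s = merge S1 c1 (merge S2 c2 s)" for c1 c2 s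
    by (auto simp: fun_eq_iff merge_def)
  have agree: "(\<forall>i\<in>S1. merge S2 c2 s i = merge S2 c2 t i) = (\<forall>i\<in>S1. s i = t i)" for c2
    using assms(1) by (auto simp: merge_def)
  have mc: "c2 \<in> cfg d S2 \<Longrightarrow> x \<in> ?C \<Longrightarrow> merge S2 c2 x \<in> ?C" for c2 x
    using merge_cfg assms(3) by blast
  show "ptr d N (S1 \<union> S2) Z s t = ptr d N S2 (ptr d N S1 Z) s t"
  proof (cases "s \<in> ?C \<and> t \<in> ?C \<and> (\<forall>i\<in>S2. s i = t i)")
    case True
    then have sC: "s \<in> ?C" and tC: "t \<in> ?C" and a2: "\<forall>i\<in>S2. s i = t i" by auto
    have outer: "ptr d N S2 (ptr d N S1 Z) s t
        = (\<Sum>c2\<in>cfg d S2. ptr d N S1 Z (merge S2 c2 s) (merge S2 c2 t))"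
      by (rule ptr_apply[OF assms(3) sC tC a2])
    show ?thesis
    proof (cases "\<forall>i\<in>S1. s i = t i")
      case True
      have inner: "ptr d N S1 Z (merge S2 c2 s) (merge S2 c2 t) =
            (\<Sum>c1\<in>cfg d S1. Z (merge S1 c1 (merge S2 c2 s)) (merge S1 c1 (merge S2 c2 t)))"
        if c2: "c2 \<in> cfg d S2" for c2
        by (rule ptr_apply[OF assms(2) mc[OF c2 sC] mc[OF c2 tC]]) (use True agree in blast)
      have a12: "\<forall>i\<in>S1 \<union> S2. s i = t i" using True a2 by blast
      show ?thesis
        unfolding ptr_apply[OF U sC tC a12] sum_cfg_split[OF assms(1)] mm outer
        by (simp add: inner)
    next
      case False
      have "ptr d N S1 Z (merge S2 c2 s) (merge S2 c2 t) = 0" for c2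
        by (rule ptr_apply_zero[OF assms(2)]) (use False agree in blast)
      moreover have "ptr d N (S1 \<union> S2) Z s t = 0"
        by (rule ptr_apply_zero[OF U]) (use False in blast)
      ultimately show ?thesis unfolding outer by simp
    qed
  next
    case False
    have "ptr d N (S1 \<union> S2) Z s t = 0"
      by (rule ptr_apply_zero[OF U]) (use False in blast)
    moreover have "ptr d N S2 (ptr d N S1 Z) s t = 0"
      by (rule ptr_apply_zero[OF assms(3)]) (use False in blast)
    ultimately show ?thesis by simp
  qed
qed

lemma Emap_comp:
  assumes "I' \<subseteq> I" "I \<subseteq> {1..N}"
  shows "Emap d N Ob I' X = ptr d N (I - I') (Emap d N Ob I X)"
proof -
  have e: "{1..N} - I' = ({1..N} - I) \<union> (I - I')" using assms by auto
  show ?thesis unfolding Emap_def e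
    by (rule ptr_comp) (use assms in auto)
qed

lemma embed_add: "embed d N I (A + B) = embed d N I A + embed d N I B"
  by (auto simp: embed_def fun_eq_iff)

lemma embed_scale: "embed d N I (cscale c A) = cscale c (embed d N I A)"
  by (auto simp: embed_def fun_eq_iff cscale_def)

lemma ptr_add: "ptr d N S (A + B) = ptr d N S A + ptr d N S B"
proof -
  have "(\<lambda>a b. \<Sum>c\<in>cfg d S. (A + B) (merge S c a) (merge S c b)) =
        (\<lambda>a b. \<Sum>c\<in>cfg d S. A (merge S c a) (merge S c b))
      + (\<lambda>a b. \<Sum>c\<in>cfg d S. B (merge S c a) (merge S c b))"
    by (simp add: fun_eq_iff sum.distrib)
  then show ?thesis unfolding ptr_def by (simp add: embed_add)
qed

lemma ptr_scale: "ptr d N S (cscale c A) = cscale c (ptr d N S A)"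
proof -
  have "(\<lambda>a b. \<Sum>x\<in>cfg d S. cscale c A (merge S x a) (merge S x b)) =
        cscale c (\<lambda>a b. \<Sum>x\<in>cfg d S. A (merge S x a) (merge S x b))"
    by (simp add: fun_eq_iff sum_distrib_left cscale_def)
  then show ?thesis unfolding ptr_def by (simp add: embed_scale)
qed

lemma opmult_add: "opmult d N (A + B) Y = opmult d N A Y + opmult d N B Y"
  by (simp add: opmult_def fun_eq_iff sum.distrib distrib_right)

lemma opmult_scale: "opmult d N (cscale c A) Y = cscale c (opmult d N A Y)"
  by (simp add: opmult_def fun_eq_iff sum_distrib_left cscale_def mult.assoc)

interpretation embed: Vector_Spaces.linear cscale cscale "embed d N I" for d N I
  by (rule iffD2[OF Vector_Spaces.linear_iff])
     (simp add: V.vector_space_axioms embed_add embed_scale)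

interpretation ptr: Vector_Spaces.linear cscale cscale "ptr d N S" for d N S
  by (rule iffD2[OF Vector_Spaces.linear_iff])
     (simp add: V.vector_space_axioms ptr_add ptr_scale)

interpretation Emap: Vector_Spaces.linear cscale cscale "Emap d N Ob I" for d N Ob I
  by (rule iffD2[OF Vector_Spaces.linear_iff])
     (simp add: V.vector_space_axioms Emap_def opmult_add opmult_scale ptr_add ptr_scale)

lemma Vsp_subspace: "V.subspace (Vsp d N I)"
  unfolding Vsp_def by (rule embed.subspace_image[OF V.subspace_UNIV])

text \<open>Operators supported on configurations of {1..N}; the values of embed, ptr and E
  all have this property, and such operators span a finite-dimensional space.\<close>
definition supp :: "nat \<Rightarrow> nat \<Rightarrow> op \<Rightarrow> bool" where
  "supp d N X \<longleftrightarrow> (\<forall>s t. X s t \<noteq> 0 \<longrightarrow> s \<in> cfg d {1..N} \<and> t \<in> cfg d {1..N})"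

lemma supp_Vsp: "X \<in> Vsp d N I \<Longrightarrow> supp d N X"
  by (auto simp: Vsp_def supp_def embed_def split: if_splits)

lemma supp_Emap: "supp d N (Emap d N Ob I X)"
  by (simp add: Emap_def ptr_def supp_def embed_def)

lemma supp_diff: "supp d N A \<Longrightarrow> supp d N B \<Longrightarrow> supp d N (A - B)"
  unfolding supp_def by (metis diff_zero fun_diff_def)

definition delta :: "(nat \<Rightarrow> nat) \<Rightarrow> (nat \<Rightarrow> nat) \<Rightarrow> op" where
  "delta a b = (\<lambda>s t. if s = a \<and> t = b then 1 else 0)"

definition Dset :: "nat \<Rightarrow> nat \<Rightarrow> op set" where
  "Dset d N = (\<lambda>p. delta (fst p) (snd p)) ` (cfg d {1..N} \<times> cfg d {1..N})"

lemma finite_Dset: "finite (Dset d N)"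
  by (simp add: Dset_def finite_cfg)

lemma supp_span: "supp d N X \<Longrightarrow> X \<in> V.span (Dset d N)"
proof -
  assume X: "supp d N X"
  let ?C = "cfg d {1..N}"
  have eq: "X = (\<Sum>p\<in>?C \<times> ?C. cscale (X (fst p) (snd p)) (delta (fst p) (snd p)))"
  proof (rule ext, rule ext)
    fix s t
    have "(\<Sum>p\<in>?C \<times> ?C. cscale (X (fst p) (snd p)) (delta (fst p) (snd p))) s t
        = (\<Sum>p\<in>?C \<times> ?C. if p = (s, t) then X s t else 0)"
      unfolding op_sum_apply by (rule sum.cong) (auto simp: cscale_def delta_def)
    also have "\<dots> = X s t"
      using X by (auto simp: supp_def finite_cfg)
    finally show "X s t = (\<Sum>p\<in>?C \<times> ?C. cscale (X (fst p) (snd p)) (delta (fst p) (snd p))) s t"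
      by simp
  qed
  show ?thesis
    by (subst eq, rule V.span_sum, rule V.span_scale, rule V.span_base) (auto simp: Dset_def)
qed

lemma independent_supp_finite:
  assumes "V.independent B" "\<forall>x\<in>B. supp d N x"
  shows "finite B"
  using V.independent_span_bound[OF finite_Dset assms(1)] assms(2) supp_span by blast

section \<open>The Hilbert-Schmidt inner product\<close>

lemma hs_add1: "hs_inner d N (A1 + A2) B = hs_inner d N A1 B + hs_inner d N A2 B"
  by (simp add: hs_inner_def sum.distrib distrib_right)

lemma hs_scale1: "hs_inner d N (cscale c A) B = cnj c * hs_inner d N A B"
  by (simp add: hs_inner_def sum_distrib_left cscale_def algebra_simps)

lemma hs_add2: "hs_inner d N A (B1 + B2) = hs_inner d N A B1 + hs_inner d N A B2"
  by (simp add: hs_inner_def sum.distrib distrib_left)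

lemma hs_diff2: "hs_inner d N A (B1 - B2) = hs_inner d N A B1 - hs_inner d N A B2"
  by (simp add: hs_inner_def sum_subtractf right_diff_distrib)

lemma hs_scale2: "hs_inner d N A (cscale c B) = c * hs_inner d N A B"
  by (simp add: hs_inner_def sum_distrib_left cscale_def algebra_simps)

lemma hs_zero2: "hs_inner d N A 0 = 0"
  by (simp add: hs_inner_def)

lemma hs_self_zero:
  assumes "hs_inner d N A A = 0" "s \<in> cfg d {1..N}" "t \<in> cfg d {1..N}"
  shows "A s t = 0"
proof -
  let ?C = "cfg d {1..N}"
  have "hs_inner d N A A = of_real (\<Sum>s\<in>?C. \<Sum>t\<in>?C. (cmod (A s t))^2)"
    unfolding hs_inner_def of_real_sum
    by (rule sum.cong[OF refl], rule sum.cong[OF refl]) (metis complex_norm_square mult.commute)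
  then have 0: "(\<Sum>s\<in>?C. \<Sum>t\<in>?C. (cmod (A s t))^2) = 0" using assms(1) by (metis of_real_eq_0_iff)
  have "(\<Sum>t\<in>?C. (cmod (A s t))^2) = 0"
    using 0 assms(2) by (subst (asm) sum_nonneg_eq_0_iff) (auto simp: finite_cfg intro: sum_nonneg)
  then have "(cmod (A s t))^2 = 0"
    using assms(3) by (subst (asm) sum_nonneg_eq_0_iff) (auto simp: finite_cfg)
  then show ?thesis by simp
qed

lemma hs_self_zero_inner:
  assumes "hs_inner d N A A = 0"
  shows "hs_inner d N A B = 0"
  unfolding hs_inner_def using hs_self_zero[OF assms] by (auto intro!: sum.neutral)

lemma hs_definite:
  assumes "hs_inner d N A A = 0" "supp d N A"
  shows "A = 0"
proof (rule ext, rule ext)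
  fix s t
  show "A s t = 0 s t"
    using hs_self_zero[OF assms(1), of s t] assms(2) unfolding supp_def by auto
qed

text \<open>Orthogonal projection onto the span of a finite set (Gram-Schmidt step by step):
  every w differs from some element of span B by a vector orthogonal to span B.\<close>
lemma orthogonal_projection_exists:
  "finite B \<Longrightarrow> \<exists>k\<in>V.span B. \<forall>z\<in>V.span B. hs_inner d N z (w - k) = 0"
proof (induction B arbitrary: w rule: finite_induct)
  case empty
  show ?case by (rule bexI[of _ 0]) (auto simp: hs_inner_def V.span_empty)
next
  case (insert b B)
  obtain k1 where k1: "k1 \<in> V.span B" "\<forall>z\<in>V.span B. hs_inner d N z (w - k1) = 0"
    using insert.IH by blast
  obtain kb where kb: "kb \<in> V.span B" "\<forall>z\<in>V.span B. hs_inner d N z (b - kb) = 0"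
    using insert.IH by blast
  define b' where "b' = b - kb"
  have b'_orth: "\<forall>z\<in>V.span B. hs_inner d N z b' = 0" using kb by (simp add: b'_def)
  have decomp: "\<exists>c z'. z = cscale c b' + z' \<and> z' \<in> V.span B" if z: "z \<in> V.span (insert b B)" for z
  proof -
    from z obtain c where c: "z - cscale c b \<in> V.span B" using V.span_breakdown_eq by blast
    have "z = cscale c b' + (z - cscale c b + cscale c kb)"
      by (simp add: b'_def V.scale_right_diff_distrib)
    moreover have "z - cscale c b + cscale c kb \<in> V.span B"
      using c kb(1) by (intro V.span_add V.span_scale)
    ultimately show ?thesis by blast
  qed
  have sub: "V.span B \<subseteq> V.span (insert b B)" by (rule V.span_mono) auto
  have bin: "b \<in> V.span (insert b B)" by (rule V.span_base) auto
  show ?case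
  proof (cases "hs_inner d N b' b' = 0")
    case True
    show ?thesis
    proof (rule bexI[of _ k1])
      show "k1 \<in> V.span (insert b B)" using k1 sub by auto
      show "\<forall>z\<in>V.span (insert b B). hs_inner d N z (w - k1) = 0"
      proof
        fix z assume "z \<in> V.span (insert b B)"
        then obtain c z' where z: "z = cscale c b' + z'" "z' \<in> V.span B" using decomp by blast
        show "hs_inner d N z (w - k1) = 0"
          using z k1 hs_self_zero_inner[OF True] by (simp add: hs_add1 hs_scale1)
      qed
    qed
  next
    case False
    define \<alpha> where "\<alpha> = hs_inner d N b' (w - k1) / hs_inner d N b' b'"
    show ?thesis
    proof (rule bexI[of _ "k1 + cscale \<alpha> b'"])
      show "k1 + cscale \<alpha> b' \<in> V.span (insert b B)"
        using k1 kb sub bin unfolding b'_def by (intro V.span_add V.span_scale V.span_diff) auto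
      show "\<forall>z\<in>V.span (insert b B). hs_inner d N z (w - (k1 + cscale \<alpha> b')) = 0"
      proof
        fix z assume "z \<in> V.span (insert b B)"
        then obtain c z' where z: "z = cscale c b' + z'" "z' \<in> V.span B" using decomp by blast
        have e: "w - (k1 + cscale \<alpha> b') = (w - k1) - cscale \<alpha> b'" by (simp add: algebra_simps)
        have 1: "hs_inner d N z' (w - k1) = 0" using k1 z by auto
        have 2: "hs_inner d N z' b' = 0" using b'_orth z by auto
        have 3: "hs_inner d N b' (w - k1) - \<alpha> * hs_inner d N b' b' = 0"
          using False by (simp add: \<alpha>_def)
        have "hs_inner d N z (w - (k1 + cscale \<alpha> b')) =
           cnj c * (hs_inner d N b' (w - k1) - \<alpha> * hs_inner d N b' b') +
           (hs_inner d N z' (w - k1) - \<alpha> * hs_inner d N z' b')"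
          unfolding e z(1) by (simp add: hs_add1 hs_add2 hs_scale1 hs_diff2 hs_scale2 algebra_simps)
        then show "hs_inner d N z (w - (k1 + cscale \<alpha> b')) = 0" by (simp add: 1 2 3)
      qed
    qed
  qed
qed

section \<open>The pseudoinverse on consistent equations\<close>

definition pinv_sol :: "nat \<Rightarrow> nat \<Rightarrow> op \<Rightarrow> nat set \<Rightarrow> nat set \<Rightarrow> op \<Rightarrow> op \<Rightarrow> bool" where
  "pinv_sol d N Ob I J y x \<longleftrightarrow> x \<in> Vsp d N J
      \<and> (\<forall>z\<in>Vsp d N J. Emap d N Ob I z = 0 \<longrightarrow> hs_inner d N z x = 0)
      \<and> (\<forall>z\<in>Vsp d N J. hs_inner d N (Emap d N Ob I z) (Emap d N Ob I x - y) = 0)"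

lemma pinv_sol_unique:
  assumes P1: "pinv_sol d N Ob I J y x1" and P2: "pinv_sol d N Ob I J y x2"
  shows "x1 = x2"
proof -
  let ?E = "Emap d N Ob I"
  let ?e = "x1 - x2"
  have eW: "?e \<in> Vsp d N J"
    using P1 P2 Vsp_subspace unfolding pinv_sol_def by (auto intro: V.subspace_diff)
  have "hs_inner d N (?E ?e) (?E x1 - y) = 0" "hs_inner d N (?E ?e) (?E x2 - y) = 0"
    using P1 P2 eW unfolding pinv_sol_def by auto
  then have "hs_inner d N (?E ?e) (?E ?e) = 0" by (simp add: hs_diff2 Emap.diff)
  then have Ee: "?E ?e = 0" using hs_definite supp_Emap by blast
  have "hs_inner d N ?e x1 = 0" "hs_inner d N ?e x2 = 0"
    using P1 P2 eW Ee unfolding pinv_sol_def by auto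
  then have "hs_inner d N ?e ?e = 0" by (simp add: hs_diff2)
  moreover have "supp d N ?e"
    using P1 P2 unfolding pinv_sol_def by (auto intro: supp_diff supp_Vsp)
  ultimately show ?thesis using hs_definite by fastforce
qed

text \<open>For a consistent right-hand side y = E(w0), removing from w0 its projection onto the
  kernel of E|V_J gives an exact solution satisfying the pseudoinverse conditions.\<close>
lemma pinv_sol_exact:
  assumes "w0 \<in> Vsp d N J"
  shows "\<exists>x0. pinv_sol d N Ob I J (Emap d N Ob I w0) x0 \<and> Emap d N Ob I x0 = Emap d N Ob I w0"
proof -
  let ?E = "Emap d N Ob I"
  define K where "K = Vsp d N J \<inter> {z. ?E z = 0}"
  have Ksub: "V.subspace K" unfolding K_def
    by (rule V.subspace_inter[OF Vsp_subspace Emap.subspace_kernel])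
  obtain B where B: "B \<subseteq> K" "V.independent B" "K \<subseteq> V.span B"
    by (rule V.basis_exists)
  have finB: "finite B"
    using independent_supp_finite[OF B(2)] B(1) by (auto simp: K_def intro: supp_Vsp)
  obtain k where k: "k \<in> V.span B" "\<forall>z\<in>V.span B. hs_inner d N z (w0 - k) = 0"
    using orthogonal_projection_exists[OF finB] by blast
  have kK: "k \<in> K" using k(1) V.span_minimal[OF B(1) Ksub] by blast
  have x0W: "w0 - k \<in> Vsp d N J"
    using kK assms Vsp_subspace by (auto simp: K_def intro: V.subspace_diff)
  have Ex0: "?E (w0 - k) = ?E w0" using kK by (simp add: Emap.diff K_def)
  have "pinv_sol d N Ob I J (?E w0) (w0 - k)"
    unfolding pinv_sol_def using x0W Ex0 k(2) B(3) by (auto simp: K_def hs_zero2)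
  then show ?thesis using Ex0 by blast
qed

lemma Epinv_consistent:
  assumes "w0 \<in> Vsp d N J"
  shows "Epinv d N Ob I J (Emap d N Ob I w0) \<in> Vsp d N J \<and>
         Emap d N Ob I (Epinv d N Ob I J (Emap d N Ob I w0)) = Emap d N Ob I w0"
proof -
  obtain x0 where x0: "pinv_sol d N Ob I J (Emap d N Ob I w0) x0"
      "Emap d N Ob I x0 = Emap d N Ob I w0"
    using pinv_sol_exact[OF assms] by blast
  have "Epinv d N Ob I J (Emap d N Ob I w0) = (THE x. pinv_sol d N Ob I J (Emap d N Ob I w0) x)"
    unfolding Epinv_def pinv_sol_def ..
  also have "\<dots> = x0" using x0(1) pinv_sol_unique by blast
  finally show ?thesis using x0 unfolding pinv_sol_def by simp
qed

section \<open>Dimension counting\<close>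

lemma subspace_dim_compare:
  assumes M: "V.subspace M" and MR: "M \<subseteq> R" and RD: "R \<subseteq> V.span D" and D: "finite D"
  shows "V.dim M \<le> V.dim R" and "V.dim R \<le> V.dim M \<Longrightarrow> R \<subseteq> M"
proof -
  obtain B where B: "B \<subseteq> M" "V.independent B" "M \<subseteq> V.span B" "card B = V.dim M"
    by (rule V.basis_exists)
  obtain C where C: "C \<subseteq> R" "V.independent C" "R \<subseteq> V.span C" "card C = V.dim R"
    by (rule V.basis_exists)
  have finB: "finite B" using V.independent_span_bound[OF D B(2)] B(1) MR RD by blast
  have finC: "finite C" using V.independent_span_bound[OF D C(2)] C(1) RD by blast
  have spanB: "V.span B = M" by (rule V.span_subspace[OF B(1) B(3) M])
  have BC: "card B \<le> card C" using V.independent_span_bound[OF finC B(2)] B(1) MR C(3) by blast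
  then show "V.dim M \<le> V.dim R" using B(4) C(4) by simp
  show "R \<subseteq> M" if le: "V.dim R \<le> V.dim M"
  proof
    fix x assume xR: "x \<in> R"
    show "x \<in> M"
    proof (rule ccontr)
      assume xM: "x \<notin> M"
      then have "V.independent (insert x B)" using V.independent_insertI B(2) spanB by blast
      moreover have "insert x B \<subseteq> V.span C" using xR B(1) MR C(3) by blast
      ultimately have "card (insert x B) \<le> card C" using V.independent_span_bound[OF finC] by blast
      moreover have "x \<notin> B" using xM B(1) by blast
      then have "card (insert x B) = card B + 1" using finB by simp
      ultimately show False using le B(4) C(4) by simp
    qed
  qed
qed

lemma linear_image_dim:
  assumes T: "Vector_Spaces.linear cscale cscale T"
    and M: "V.subspace M" and MD: "M \<subseteq> V.span D" and D: "finite D"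
  shows "V.dim (T ` M) \<le> V.dim M" and "V.dim (T ` M) = V.dim M \<Longrightarrow> inj_on T M"
proof -
  interpret L: Vector_Spaces.linear cscale cscale T by (rule T)
  obtain B where B: "B \<subseteq> M" "V.independent B" "M \<subseteq> V.span B" "card B = V.dim M"
    by (rule V.basis_exists)
  have finB: "finite B" using V.independent_span_bound[OF D B(2)] B(1) MD by blast
  have spanB: "V.span B = M" by (rule V.span_subspace[OF B(1) B(3) M])
  have dimTM: "V.dim (T ` M) = V.dim (T ` B)"
    using L.span_image[of B] spanB V.dim_span by metis
  have "V.dim (T ` B) \<le> card (T ` B)" by (rule V.dim_le_card[OF V.span_superset]) (use finB in simp)
  also have card_TB: "card (T ` B) \<le> card B" by (rule card_image_le[OF finB])
  finally show "V.dim (T ` M) \<le> V.dim M" using dimTM B(4) by simp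
  show "inj_on T M" if eq: "V.dim (T ` M) = V.dim M"
  proof -
    obtain B' where B': "B' \<subseteq> T ` B" "V.independent B'" "T ` B \<subseteq> V.span B'" "card B' = V.dim (T ` B)"
      by (rule V.basis_exists)
    have finTB: "finite (T ` B)" using finB by simp
    have "card B' \<le> card (T ` B)" by (rule card_mono[OF finTB B'(1)])
    then have c1: "card B' = card (T ` B)" and c2: "card (T ` B) = card B"
      using eq dimTM B(4) B'(4) card_TB by linarith+
    have "V.independent (T ` B)" using card_subset_eq[OF finTB B'(1) c1] B'(2) by simp
    moreover have "inj_on T B" by (rule eq_card_imp_inj_on[OF finB c2])
    ultimately show ?thesis using L.inj_on_span_independent_image spanB by metis
  qed
qed

lemma rank_preserving_restriction:
  assumes T: "Vector_Spaces.linear cscale cscale T"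
    and M: "V.subspace M" and MR: "M \<subseteq> R" and RD: "R \<subseteq> V.span D" and D: "finite D"
    and eq: "V.dim (T ` M) = V.dim R"
  shows "M = R" and "inj_on T R"
proof -
  have MD: "M \<subseteq> V.span D" using MR RD by blast
  have dims: "V.dim (T ` M) = V.dim M" "V.dim M = V.dim R"
    using linear_image_dim(1)[OF T M MD D] subspace_dim_compare(1)[OF M MR RD D] eq by linarith+
  show MeqR: "M = R" using subspace_dim_compare(2)[OF M MR RD D] dims(2) MR by auto
  show "inj_on T R" using linear_image_dim(2)[OF T M MD D dims(1)] MeqR by simp
qed

section \<open>The recursion step\<close>

lemma site_times_Vsp:
  assumes "0 < d" "1 \<le> k" "k \<le> N" "X \<in> Vsp d N {k}" "Y \<in> Vsp d N {k+1..N}"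
  shows "opmult d N X Y \<in> Vsp d N {k..N}"
proof -
  have sub: "{k..N} \<subseteq> {1..N}" using assms by auto
  have "X \<in> Vsp d N {k..N}" using Vsp_mono[OF assms(1) sub, of "{k}"] assms(3,4) by auto
  moreover have "Y \<in> Vsp d N {k..N}" using Vsp_mono[OF assms(1) sub, of "{k+1..N}"] assms(5) by auto
  ultimately show ?thesis by (rule Vsp_mult[OF assms(1) sub])
qed

text \<open>The product X_m \<cdots> X_N of single-site operators lies in V_{m..N}; this places the
  initial operator Y_{N-r} of the recursion.\<close>
lemma site_product_Vsp:
  assumes "0 < d" "\<forall>i\<in>{1..N}. X i \<in> Vsp d N {i}" "1 \<le> m" "m \<le> N + 1"
  shows "foldr (opmult d N) (map X [m..<N+1]) (opid d N) \<in> Vsp d N {m..N}"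
  using assms(3,4)
proof (induction "N + 1 - m" arbitrary: m)
  case 0
  then have "m = N + 1" by simp
  then show ?case by (simp add: opid_def Vsp_def)
next
  case (Suc j)
  then have mN: "m \<le> N" by simp
  have "foldr (opmult d N) (map X [m+1..<N+1]) (opid d N) \<in> Vsp d N {m+1..N}"
    by (rule Suc.hyps(1)) (use Suc.hyps(2) Suc.prems in simp_all)
  moreover have "[m..<N+1] = m # [m+1..<N+1]" using mN by (simp add: upt_conv_Cons)
  ultimately show ?case using site_times_Vsp[OF assms(1) Suc.prems(1) mN] assms(2) Suc.prems mN
    by simp
qed

lemma Emap_window_trace:
  assumes "l + 1 \<le> k" "k \<le> N + 1"
  shows "Emap d N Ob {k-l..k-1} Z = ptr d N {1..k-l-1} (Emap d N Ob {1..k-1} Z)"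
proof -
  have window: "{k-l..k-1} \<subseteq> {1..k-1}" and full: "{1..k-1} \<subseteq> {1..N}" using assms by auto
  have "{1..k-1} - {k-l..k-1} = {1..k-l-1}" using assms by auto
  then show ?thesis using Emap_comp[OF window full] by metis
qed

text \<open>Consequence of (l,r)-invertibility at k-1, with E = E_{1..k-1} and T = tr_{1..k-l-1}:
  the window V_{k..k+r-1} already produces the whole range R = E(V_{k..N}), and T is
  injective on R.\<close>
lemma lr_invertible_range:
  assumes d: "0 < d" and inv: "lr_invertible d N Ob l r" and k: "l + 1 \<le> k" "k + r \<le> N"
  shows "Emap d N Ob {1..k-1} ` Vsp d N {k..k+r-1} = Emap d N Ob {1..k-1} ` Vsp d N {k..N}"
    and "inj_on (ptr d N {1..k-l-1}) (Emap d N Ob {1..k-1} ` Vsp d N {k..N})"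
proof -
  let ?E = "Emap d N Ob {1..k-1}"
  let ?T = "ptr d N {1..k-l-1}"
  let ?W = "Vsp d N {k..k+r-1}"
  have trace_window: "Emap d N Ob {k-l..k-1} Z = ?T (?E Z)" for Z
    using Emap_window_trace k by simp
  have "l \<le> k - 1 \<and> (k - 1) + r + 1 \<le> N" using k by arith
  then have "Erank d N Ob {(k-1)-l+1..k-1} {(k-1)+1..(k-1)+r} = Erank d N Ob {1..k-1} {(k-1)+1..N}"
    using inv unfolding lr_invertible_def by blast
  moreover have "(k-1)-l+1 = k-l" "(k-1)+1 = k" "(k-1)+r = k+r-1" using k by arith+
  moreover have window_image: "Emap d N Ob {k-l..k-1} ` ?W = ?T ` (?E ` ?W)"
    unfolding image_image by (rule image_cong[OF refl trace_window])
  ultimately have rank: "V.dim (?T ` (?E ` ?W)) = V.dim (?E ` Vsp d N {k..N})"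
    unfolding Erank_def window_image[symmetric] by simp
  have "?W \<subseteq> Vsp d N {k..N}" by (rule Vsp_mono[OF d]) (use k in auto)
  then have window_sub: "?E ` ?W \<subseteq> ?E ` Vsp d N {k..N}" by (rule image_mono)
  have finite_dim: "?E ` Vsp d N {k..N} \<subseteq> V.span (Dset d N)" using supp_Emap supp_span by blast
  note restriction = rank_preserving_restriction[OF ptr.linear_axioms
      Emap.subspace_image[OF Vsp_subspace] window_sub finite_dim finite_Dset rank]
  show "?E ` ?W = ?E ` Vsp d N {k..N}" by (rule restriction(1))
  show "inj_on ?T (?E ` Vsp d N {k..N})" by (rule restriction(2))
qed

lemma Epinv_window_solves:
  assumes d: "0 < d" and inv: "lr_invertible d N Ob l r" and k: "l + 1 \<le> k" "k + r \<le> N"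
    and w: "w \<in> Vsp d N {k..N}"
    and x: "x = Epinv d N Ob {k-l..k-1} {k..k+r-1} (Emap d N Ob {k-l..k-1} w)"
  shows "x \<in> Vsp d N {k..k+r-1}" and "Emap d N Ob {1..k-1} x = Emap d N Ob {1..k-1} w"
proof -
  let ?E = "Emap d N Ob {1..k-1}"
  let ?T = "ptr d N {1..k-l-1}"
  have trace_window: "Emap d N Ob {k-l..k-1} Z = ?T (?E Z)" for Z
    using Emap_window_trace k by simp
  let ?Ew = "Emap d N Ob {k-l..k-1}"
  have "?E w \<in> ?E ` Vsp d N {k..k+r-1}"
    using lr_invertible_range(1)[OF d inv k] w by blast
  then obtain w0 where w0: "w0 \<in> Vsp d N {k..k+r-1}" "?E w = ?E w0" by (rule imageE)
  have window_eq: "?Ew w = ?Ew w0" by (simp only: trace_window w0(2))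
  have sol: "x \<in> Vsp d N {k..k+r-1} \<and> ?Ew x = ?Ew w0"
    unfolding x window_eq by (rule Epinv_consistent[OF w0(1)])
  then show xW: "x \<in> Vsp d N {k..k+r-1}" by simp
  have "?T (?E x) = ?Ew x" by (rule trace_window[symmetric])
  also have "\<dots> = ?Ew w" using sol window_eq by simp
  also have "\<dots> = ?T (?E w)" by (rule trace_window)
  finally have "?T (?E x) = ?T (?E w)" .
  moreover have "?E x \<in> ?E ` Vsp d N {k..N}"
    using lr_invertible_range(1)[OF d inv k] xW by blast
  ultimately show "?E x = ?E w"
    using inj_onD[OF lr_invertible_range(2)[OF d inv k]] w by blast
qed

lemma recursion_support:
  assumes d: "0 < d" and inv: "lr_invertible d N Ob l r"
    and X: "\<forall>i\<in>{1..N}. X i \<in> Vsp d N {i}"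
    and Y_init: "Y (N - r) = foldr (opmult d N) (map X [N-r+1..<N+1]) (opid d N)"
    and Y_rec: "\<forall>k. l + 1 \<le> k \<and> k \<le> N - r \<longrightarrow>
           Y (k - 1) = Epinv d N Ob {k-l..k-1} {k..k+r-1}
                         (Emap d N Ob {k-l..k-1} (opmult d N (X k) (Y k)))"
    and k: "l \<le> k" "k \<le> N - r"
  shows "Y k \<in> Vsp d N {k+1..N}"
  using k(2)
proof (induction rule: inc_induct)
  case base
  show ?case using site_product_Vsp[OF d X, of "N-r+1"] Y_init by simp
next
  case (step n)
  have n: "l + 1 \<le> Suc n" "Suc n + r \<le> N" using step.hyps k(1) by auto
  have "Y n = Epinv d N Ob {Suc n-l..Suc n-1} {Suc n..Suc n+r-1}
                (Emap d N Ob {Suc n-l..Suc n-1} (opmult d N (X (Suc n)) (Y (Suc n))))"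
    using Y_rec[rule_format, of "Suc n"] n by simp
  moreover have "opmult d N (X (Suc n)) (Y (Suc n)) \<in> Vsp d N {Suc n..N}"
    using site_times_Vsp[OF d _ _ _ step.IH] X n by simp
  ultimately have "Y n \<in> Vsp d N {Suc n..Suc n+r-1}"
    using Epinv_window_solves(1)[OF d inv n] by blast
  moreover have "Vsp d N {Suc n..Suc n+r-1} \<subseteq> Vsp d N {n+1..N}"
    by (rule Vsp_mono[OF d]) (use n in auto)
  ultimately show ?case by blast
qed

theorem mainTheorem2:
  fixes d N l r :: nat and Ob :: op and X Y :: "nat \<Rightarrow> op"
  assumes "0 < d" and "N \<ge> 4" and "1 \<le> l" and "1 \<le> r"
    and "2 \<le> l + r" and "l + r \<le> N - 2"
    and "Ob \<in> Vsp d N {1..N}"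
    and "lr_invertible d N Ob l r"
    and "\<forall>i\<in>{1..N}. X i \<in> Vsp d N {i}"
    and "Y (N - r) = foldr (opmult d N) (map X [N-r+1..<N+1]) (opid d N)"
    and "\<forall>k. l + 1 \<le> k \<and> k \<le> N - r \<longrightarrow>
           Y (k - 1) = Epinv d N Ob {k-l..k-1} {k..k+r-1}
                         (Emap d N Ob {k-l..k-1} (opmult d N (X k) (Y k)))"
  shows "\<forall>k. l + 1 \<le> k \<and> k \<le> N - r \<longrightarrow>
           Emap d N Ob {1..k-1} (Y (k - 1)) = Emap d N Ob {1..k-1} (opmult d N (X k) (Y k))
         \<and> inj_on (ptr d N {1..k-l-1}) (Emap d N Ob {1..k-1} ` Vsp d N {k..k+r})"
proof (intro allI impI conjI)
  fix k assume k: "l + 1 \<le> k \<and> k \<le> N - r"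
  then have kN: "1 \<le> k" "k + r \<le> N" using assms(2-6) by auto
  have "Y k \<in> Vsp d N {k+1..N}"
    using recursion_support[OF assms(1,8,9,10,11)] k by simp
  then have w: "opmult d N (X k) (Y k) \<in> Vsp d N {k..N}"
    using site_times_Vsp[OF assms(1)] assms(9) kN by simp
  show "Emap d N Ob {1..k-1} (Y (k - 1)) = Emap d N Ob {1..k-1} (opmult d N (X k) (Y k))"
    using Epinv_window_solves(2)[OF assms(1,8) _ _ w] assms(11) k kN by auto
  have "Vsp d N {k..k+r} \<subseteq> Vsp d N {k..N}" by (rule Vsp_mono[OF assms(1)]) (use kN in auto)
  then show "inj_on (ptr d N {1..k-l-1}) (Emap d N Ob {1..k-1} ` Vsp d N {k..k+r})"
    using lr_invertible_range(2)[OF assms(1,8)] k kN by (meson image_mono inj_on_subset)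
qed

end
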